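(* Let $m\ge 1$, $\alpha\in(0,1)$, and let $\mathbf{X}=(X_1,\dots,X_m)$ be a real random vector whose joint CDF $F_{\mathbf{X}}$ is continuous and strictly increasing, with continuous marginal CDFs $F_{X_1},\dots,F_{X_m}$ and copula $C_{\mathbf{X}}$, so that $F_{\mathbf{X}}(x_1,\dots,x_m)=C_{\mathbf{X}}(F_{X_1}(x_1),\dots,F_{X_m}(x_m))$. Let $q_{\max}$ be the value returned by the max-rank procedure, i.e. the smallest $q\in[0,1]$ such that $\mathbb{P}\big(\max_{1\le k\le m}\tilde R_k\le q\big)\ge 1-\alpha$, where $\tilde R_k=F_{X_k}(X_k)$ is the normalized rank of the $k$-th component. Then $q_{\max}$ solves the constrained problem $$\min q \quad\text{s.t.}\quad C_{\mathbf{X}}(q,\dots,q)\ge 1-\alpha,$$ i.e. $C_{\mathbf{X}}(q_{\max},\dots,q_{\max})\ge 1-\alpha$ and no smaller $q$ satisfies this constraint. Consequently the thresholds $x_{t,k}=F_{X_k}^{-1}(q_{\max})$, $k=1,\dots,m$, satisfy $\mathbb{P}(X_1\le x_{t,1},\dots,X_m\le x_{t,m})\ge 1-\alpha$ (family-wise error control at level $\alpha$), and among all thresholds with a common marginal quantile level they are optimal in the sense of maximal statistical power (decreasing the common level by any $\epsilon>0$ violates the error control).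
   Context: Setting: $m$ hypothesis tests are run in parallel; test $k$ has an empirical null distribution $\mathbf{s}_k=(s_{1,k},\dots,s_{n,k})$ of size $n$, collected in a matrix $\mathbf{S}\in\mathbb{R}^{n\times m}$, with column-wise rank matrix $\mathbf{R}=[r_{i,k}]$, where $r_{i,k}=|\{j\in[n]: s_{j,k}\le s_{i,k}\}|$ (ranks assumed distinct). The max-rank procedure: compute $\mathbf{r}_{\max}=(\max_k r_{1,k},\dots,\max_k r_{n,k})$, sort it ascending and take $r_{\max}$ as the entry at index $\lceil (n+1)(1-\alpha)\rceil$; then for each test $k$ use as corrected threshold (quantile) the $r_{\max}$-th smallest value of $\mathbf{s}_k$. Modeling each test statistic as a component $X_k$ of the random vector $\mathbf{X}$, normalized ranks $r/n$ correspond to values of the marginal CDF $F_{X_k}$, so the normalized selected rank $r_{\max}/n$ corresponds to the $(1-\alpha)$-quantile $q_{\max}$ of $\max_k F_{X_k}(X_k)$. A vector of thresholds $\mathbf{x}_t$ controls the family-wise error rate (probability of at least one false rejection) at level $\alpha$ iff $F_{\mathbf{X}}(\mathbf{x}_t)\ge 1-\alpha$; a smaller common quantile level means larger corrected significance levels and hence higher statistical power. *)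

theory Defs
  imports "HOL-Probability.Probability"
begin

definition joint_cdf :: "'a measure \<Rightarrow> ('n \<Rightarrow> 'a \<Rightarrow> real) \<Rightarrow> ('n \<Rightarrow> real) \<Rightarrow> real" where
  "joint_cdf M X x = measure M {\<omega> \<in> space M. \<forall>k. X k \<omega> \<le> x k}"

definition marg_cdf :: "'a measure \<Rightarrow> ('n \<Rightarrow> 'a \<Rightarrow> real) \<Rightarrow> 'n \<Rightarrow> real \<Rightarrow> real" where
  "marg_cdf M X k = cdf (distr M borel (X k))"

definition quantile :: "(real \<Rightarrow> real) \<Rightarrow> real \<Rightarrow> real" where
  "quantile F q = Inf {x. q \<le> F x}"

text \<open>Copula on [0,1]^n (n = CARD('n)): grounded, uniform margins, n-increasing.\<close>
definition is_copula :: "(('n::finite \<Rightarrow> real) \<Rightarrow> real) \<Rightarrow> bool" where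
  "is_copula C \<longleftrightarrow>
     (\<forall>u. (\<forall>k. 0 \<le> u k \<and> u k \<le> 1) \<longrightarrow> 0 \<le> C u \<and> C u \<le> 1) \<and>
     (\<forall>u. (\<forall>k. 0 \<le> u k \<and> u k \<le> 1) \<and> (\<exists>k. u k = 0) \<longrightarrow> C u = 0) \<and>
     (\<forall>k t. 0 \<le> t \<and> t \<le> 1 \<longrightarrow> C (\<lambda>j. if j = k then t else 1) = t) \<and>
     (\<forall>a b. (\<forall>k. 0 \<le> a k \<and> a k \<le> b k \<and> b k \<le> 1) \<longrightarrow>
        0 \<le> (\<Sum>S\<in>(UNIV :: 'n set set). (-1) ^ card S * C (\<lambda>j. if j \<in> S then a j else b j)))"

end

theory Submission
  imports Defs
begin

text \<open>A strictly increasing joint CDF forces every marginal CDF F_k to be strictly increasing;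
  being also continuous, F_k is a bijection onto (0,1).  So for 0 < q < 1 the event
  max_k F_k(X_k) \<le> q is exactly the event X_k \<le> F_k^-1(q) for all k, whose probability is
  F_X(F_1^-1(q), ..., F_m^-1(q)) = C(q, ..., q) by Sklar's formula: the max-rank constraint and
  the copula constraint coincide on (0,1).  The endpoints do not interfere: q = 0 is infeasible
  for both (ranks are positive, copulas are grounded), and q_max < 1 because all ranks are
  below 1, so P(max_k F_k(X_k) \<le> q) tends to 1 as q tends to 1 from the left.\<close>

lemma cdf_distr_eq_measure:
  fixes Y :: "'a \<Rightarrow> real"
  assumes "Y \<in> borel_measurable M"
  shows "cdf (distr M borel Y) t = measure M {\<omega> \<in> space M. Y \<omega> \<le> t}"
proof -
  have "cdf (distr M borel Y) t = measure M (Y -` {..t} \<inter> space M)"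
    unfolding cdf_def using assms by (subst measure_distr) auto
  also have "Y -` {..t} \<inter> space M = {\<omega> \<in> space M. Y \<omega> \<le> t}"
    by auto
  finally show ?thesis .
qed

lemma (in prob_space) prob_le_tendsto_at_left:
  fixes Y :: "'a \<Rightarrow> real"
  assumes "Y \<in> borel_measurable M" and "\<And>\<omega>. \<omega> \<in> space M \<Longrightarrow> Y \<omega> < c"
  shows "((\<lambda>q. prob {\<omega> \<in> space M. Y \<omega> \<le> q}) \<longlongrightarrow> 1) (at_left c)"
proof -
  interpret Y: real_distribution "distr M borel Y"
    using assms(1) by simp
  have "Y -` {..<c} \<inter> space M = space M"
    using assms(2) by auto
  then have "measure (distr M borel Y) {..<c} = 1"
    using assms(1) by (simp add: measure_distr prob_space)
  then show ?thesis
    using Y.cdf_at_left[of c] by (simp add: cdf_distr_eq_measure[OF assms(1), abs_def])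
qed

lemma quantile_eqI:
  assumes "strict_mono F" and "F x = q"
  shows "quantile F q = x"
proof -
  have "{t. q \<le> F t} = {x..}"
    using assms by (auto simp: strict_mono_less_eq)
  then show ?thesis
    by (simp add: quantile_def)
qed

lemma (in real_distribution) cdf_attains:
  assumes "continuous_on UNIV (cdf M)" and "0 < q" "q < 1"
  obtains x where "cdf M x = q"
proof -
  obtain a where a: "\<And>t. t \<le> a \<Longrightarrow> cdf M t < q"
    using order_tendstoD(2)[OF cdf_lim_at_bot \<open>0 < q\<close>] by (auto simp: eventually_at_bot_linorder)
  obtain b where b: "\<And>t. b \<le> t \<Longrightarrow> q < cdf M t"
    using order_tendstoD(1)[OF cdf_lim_at_top_prob \<open>q < 1\<close>] by (auto simp: eventually_at_top_linorder)
  have "\<exists>x. min a b \<le> x \<and> x \<le> max a b \<and> cdf M x = q"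
    using a[of "min a b"] b[of "max a b"] continuous_on_subset[OF assms(1)]
    by (intro IVT') auto
  then show ?thesis
    using that by blast
qed

lemma (in real_distribution) cdf_quantile:
  assumes "continuous_on UNIV (cdf M)" and "strict_mono (cdf M)" and "0 < q" "q < 1"
  shows "cdf M (quantile (cdf M) q) = q"
  using cdf_attains[OF assms(1,3,4)] quantile_eqI[OF assms(2)] by metis

lemma joint_cdf_fun_upd_diff_le:
  fixes X :: "'n::finite \<Rightarrow> 'a \<Rightarrow> real"
  assumes "finite_measure M" and X: "\<And>j. X j \<in> borel_measurable M" and "a \<le> b"
  shows "joint_cdf M X (x(k := b)) - joint_cdf M X (x(k := a))
    \<le> marg_cdf M X k b - marg_cdf M X k a"
proof -
  interpret finite_measure M by fact
  note [measurable] = X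
  define A where "A c = {\<omega> \<in> space M. \<forall>j. X j \<omega> \<le> (x(k := c)) j}" for c
  define B where "B c = {\<omega> \<in> space M. X k \<omega> \<le> c}" for c
  have [measurable]: "A c \<in> sets M" "B c \<in> sets M" for c
    unfolding A_def B_def by measurable
  have "measure M (A b) \<le> measure M (A a \<union> (B b - B a))"
    by (rule finite_measure_mono) (auto simp: A_def B_def)
  also have "\<dots> \<le> measure M (A a) + measure M (B b - B a)"
    by (rule measure_subadditive) (auto simp: emeasure_eq_measure)
  also have "measure M (B b - B a) = measure M (B b) - measure M (B a)"
    using \<open>a \<le> b\<close> by (subst finite_measure_Diff) (auto simp: B_def)
  finally show ?thesis
    by (simp add: joint_cdf_def marg_cdf_def cdf_distr_eq_measure X A_def B_def)
qed

locale strictly_increasing_random_vector = prob_space M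
  for M :: "'a measure" +
  fixes X :: "'n::finite \<Rightarrow> 'a \<Rightarrow> real"
  assumes measurable_component [measurable]: "X k \<in> borel_measurable M"
    and strict_mono_joint_cdf: "strict_mono (joint_cdf M X)"
    and continuous_marg_cdf: "continuous_on UNIV (marg_cdf M X k)"
begin

definition max_rank :: "'a \<Rightarrow> real" where
  "max_rank \<omega> = Max (range (\<lambda>k. marg_cdf M X k (X k \<omega>)))"

lemma real_distribution_component: "real_distribution (distr M borel (X k))"
  by simp

lemma strict_mono_marg_cdf: "strict_mono (marg_cdf M X k)"
proof (rule strict_monoI)
  fix a b :: real
  assume "a < b"
  let ?x = "\<lambda>_::'n. 0::real"
  have "?x(k := a) < ?x(k := b)"
    using \<open>a < b\<close> by (auto simp: less_fun_def le_fun_def intro!: exI[of _ k])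
  then have "joint_cdf M X (?x(k := a)) < joint_cdf M X (?x(k := b))"
    by (rule strict_monoD[OF strict_mono_joint_cdf])
  moreover have "joint_cdf M X (?x(k := b)) - joint_cdf M X (?x(k := a))
      \<le> marg_cdf M X k b - marg_cdf M X k a"
    using \<open>a < b\<close> by (intro joint_cdf_fun_upd_diff_le) (auto intro: finite_measure_axioms)
  ultimately show "marg_cdf M X k a < marg_cdf M X k b"
    by linarith
qed

lemma marg_cdf_pos: "0 < marg_cdf M X k t"
proof -
  interpret X\<^sub>k: real_distribution "distr M borel (X k)"
    by (rule real_distribution_component)
  have "0 \<le> marg_cdf M X k (t - 1)"
    unfolding marg_cdf_def by (rule X\<^sub>k.cdf_nonneg)
  also have "\<dots> < marg_cdf M X k t"
    using strict_mono_marg_cdf by (rule strict_monoD) simp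
  finally show ?thesis .
qed

lemma marg_cdf_less_1: "marg_cdf M X k t < 1"
proof -
  interpret X\<^sub>k: real_distribution "distr M borel (X k)"
    by (rule real_distribution_component)
  have "marg_cdf M X k t < marg_cdf M X k (t + 1)"
    using strict_mono_marg_cdf by (rule strict_monoD) simp
  also have "\<dots> \<le> 1"
    unfolding marg_cdf_def by (rule X\<^sub>k.cdf_bounded_prob)
  finally show ?thesis .
qed

lemma marg_cdf_quantile:
  assumes "0 < q" "q < 1"
  shows "marg_cdf M X k (quantile (marg_cdf M X k) q) = q"
  using real_distribution.cdf_quantile[OF real_distribution_component]
    continuous_marg_cdf strict_mono_marg_cdf assms
  unfolding marg_cdf_def by blast

lemma max_rank_le_iff:
  assumes "0 < q" "q < 1"
  shows "max_rank \<omega> \<le> q \<longleftrightarrow> (\<forall>k. X k \<omega> \<le> quantile (marg_cdf M X k) q)"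
proof -
  have "max_rank \<omega> \<le> q \<longleftrightarrow> (\<forall>k. marg_cdf M X k (X k \<omega>) \<le> q)"
    unfolding max_rank_def by (subst Max_le_iff) auto
  also have "\<dots> \<longleftrightarrow> (\<forall>k. X k \<omega> \<le> quantile (marg_cdf M X k) q)"
    using marg_cdf_quantile[OF assms] strict_mono_less_eq[OF strict_mono_marg_cdf] by metis
  finally show ?thesis .
qed

lemma prob_max_rank_le:
  assumes "0 < q" "q < 1"
  shows "prob {\<omega> \<in> space M. max_rank \<omega> \<le> q} = joint_cdf M X (\<lambda>k. quantile (marg_cdf M X k) q)"
  by (simp add: max_rank_le_iff[OF assms] joint_cdf_def)

lemma prob_max_rank_le_0: "prob {\<omega> \<in> space M. max_rank \<omega> \<le> 0} = 0"
proof -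
  have "0 < max_rank \<omega>" for \<omega>
    unfolding max_rank_def by (subst Max_gr_iff) (auto simp: marg_cdf_pos)
  then have "{\<omega> \<in> space M. max_rank \<omega> \<le> 0} = {}"
    by (auto simp: not_le[symmetric])
  then show ?thesis
    by (metis measure_empty)
qed

lemma max_rank_measurable: "max_rank \<in> borel_measurable M"
proof -
  have [measurable]: "marg_cdf M X k \<in> borel_measurable borel" for k
    using continuous_marg_cdf by (rule borel_measurable_continuous_onI)
  show ?thesis
    unfolding max_rank_def[abs_def] by measurable
qed

lemma prob_max_rank_le_tendsto_1:
  "((\<lambda>q. prob {\<omega> \<in> space M. max_rank \<omega> \<le> q}) \<longlongrightarrow> 1) (at_left 1)"
proof (rule prob_le_tendsto_at_left[OF max_rank_measurable])
  show "max_rank \<omega> < 1" for \<omega>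
    unfolding max_rank_def by (subst Max_less_iff) (auto simp: marg_cdf_less_1)
qed

lemma prob_max_rank_le_exceeds:
  assumes "p < 1"
  obtains q where "0 < q" "q < 1" "p < prob {\<omega> \<in> space M. max_rank \<omega> \<le> q}"
proof -
  have "\<forall>\<^sub>F q in at_left 1. p < prob {\<omega> \<in> space M. max_rank \<omega> \<le> q} \<and> q \<in> {0<..<1}"
    using order_tendstoD(1)[OF prob_max_rank_le_tendsto_1 assms] eventually_at_left_real
    by (intro eventually_conj) auto
  then show ?thesis
    using that eventually_happens'[OF trivial_limit_at_left_real] by auto
qed

end

theorem proposition1:
  fixes M :: "'a measure" and X :: "('n::finite) \<Rightarrow> 'a \<Rightarrow> real"
    and C :: "('n \<Rightarrow> real) \<Rightarrow> real" and \<alpha> q_max :: real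
  assumes "prob_space M"
    and X_rv: "\<And>k. X k \<in> borel_measurable M"
    and alpha: "0 < \<alpha>" "\<alpha> < 1"
    and joint_cont: "continuous_on UNIV (joint_cdf M X)"
    and joint_strict: "strict_mono (joint_cdf M X)"
    and marg_cont: "\<And>k. continuous_on UNIV (marg_cdf M X k)"
    and copula: "is_copula C"
    and sklar: "\<And>x. joint_cdf M X x = C (\<lambda>k. marg_cdf M X k (x k))"
    and qmax_range: "0 \<le> q_max" "q_max \<le> 1"
    and qmax_feasible: "measure M {\<omega> \<in> space M. Max (range (\<lambda>k. marg_cdf M X k (X k \<omega>))) \<le> q_max} \<ge> 1 - \<alpha>"
    and qmax_least: "\<And>q. 0 \<le> q \<Longrightarrow> q \<le> 1 \<Longrightarrow>
        measure M {\<omega> \<in> space M. Max (range (\<lambda>k. marg_cdf M X k (X k \<omega>))) \<le> q} \<ge> 1 - \<alpha> \<Longrightarrow> q_max \<le> q"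
  shows "C (\<lambda>_. q_max) \<ge> 1 - \<alpha>
     \<and> (\<forall>q. 0 \<le> q \<and> q \<le> 1 \<and> C (\<lambda>_. q) \<ge> 1 - \<alpha> \<longrightarrow> q_max \<le> q)
     \<and> joint_cdf M X (\<lambda>k. quantile (marg_cdf M X k) q_max) \<ge> 1 - \<alpha>
     \<and> (\<forall>\<epsilon>. 0 < \<epsilon> \<and> \<epsilon> < q_max \<longrightarrow>
          joint_cdf M X (\<lambda>k. quantile (marg_cdf M X k) (q_max - \<epsilon>)) < 1 - \<alpha>)"
proof -
  interpret strictly_increasing_random_vector M X
    using assms(1) X_rv joint_strict marg_cont by (simp add: strictly_increasing_random_vector_def
        strictly_increasing_random_vector_axioms_def)
  note feasible = qmax_feasible[folded max_rank_def] and least = qmax_least[folded max_rank_def]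
  have level: "prob {\<omega> \<in> space M. max_rank \<omega> \<le> q} = C (\<lambda>_. q)"
    "joint_cdf M X (\<lambda>k. quantile (marg_cdf M X k) q) = C (\<lambda>_. q)" if "0 < q" "q < 1" for q
    using prob_max_rank_le[OF that] sklar marg_cdf_quantile[OF that] by simp_all
  have "0 < q_max"
    using feasible prob_max_rank_le_0 alpha qmax_range by (cases "q_max = 0") auto
  have "q_max < 1"
  proof -
    obtain q where "0 < q" "q < 1" "1 - \<alpha> < prob {\<omega> \<in> space M. max_rank \<omega> \<le> q}"
      using prob_max_rank_le_exceeds[of "1 - \<alpha>"] alpha by auto
    then show ?thesis
      using least[of q] by auto
  qed
  have C_least: "q_max \<le> q" if "0 \<le> q" "q \<le> 1" "1 - \<alpha> \<le> C (\<lambda>_. q)" for q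
  proof -
    have "C (\<lambda>_. 0) = 0"
      using copula by (simp add: is_copula_def)
    then show ?thesis
      using that level(1)[of q] least[of q] alpha qmax_range
      by (cases "q = 0"; cases "q = 1") auto
  qed
  have "joint_cdf M X (\<lambda>k. quantile (marg_cdf M X k) (q_max - \<epsilon>)) < 1 - \<alpha>"
    if "0 < \<epsilon>" "\<epsilon> < q_max" for \<epsilon>
    using level(2)[of "q_max - \<epsilon>"] C_least[of "q_max - \<epsilon>"] that \<open>q_max < 1\<close> by force
  then show ?thesis
    using level[OF \<open>0 < q_max\<close> \<open>q_max < 1\<close>] feasible C_least by auto
qed

end
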